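(* If $d_1\ge d_2\ge\cdots\ge d_n$, then first-fit satisfies $FF(I)<2\,OPT(I)$ for every such instance $I$ with $OPT(I)\ge2$ (and $FF(I)=1$ when $OPT(I)=1$); in particular first-fit is a 2-approximation on this class.
   Context: Fixed order scheduling with deadlines: there are jobs $J=\{1,\dots,n\}$, each job $j$ having a processing time $p_j\in\mathbb{N}$, $p_j>0$, and a deadline $d_j\in\mathbb{N}$ with $d_j\ge p_j$. All jobs are released at time $0$; job $j$ precedes job $k$ in the fixed order iff $j<k$. A schedule $\tau:J\to\{1,\dots,n\}$ assigns jobs to identical machines; each machine processes its jobs in the fixed order from time $0$ without idle time or preemption, so job $j$ completes at $\sum_{k\le j,\tau(k)=\tau(j)}p_k$; it is feasible if every job completes by its deadline. $OPT(I)$ is the minimum number of machines used by a feasible schedule. First-fit (FF): machines indexed $1,2,\dots$; process jobs in the fixed order and assign each job $j$ to the smallest-index machine whose current load (sum of processing times already assigned) plus $p_j$ is at most $d_j$; $FF(I)$ is the number of nonempty machines. *)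

theory Defs
  imports Main
begin

text \<open>Jobs are 1..n, processing times p, deadlines d (functions on nat; only
values on 1..n matter). Machines are indexed by positive naturals.\<close>

definition completion :: "(nat \<Rightarrow> nat) \<Rightarrow> nat \<Rightarrow> (nat \<Rightarrow> nat) \<Rightarrow> nat \<Rightarrow> nat" where
  "completion p n \<tau> j = (\<Sum>k\<in>{k\<in>{1..n}. k \<le> j \<and> \<tau> k = \<tau> j}. p k)"

definition feasible :: "(nat \<Rightarrow> nat) \<Rightarrow> (nat \<Rightarrow> nat) \<Rightarrow> nat \<Rightarrow> (nat \<Rightarrow> nat) \<Rightarrow> bool" where
  "feasible p d n \<tau> \<longleftrightarrow> (\<forall>j\<in>{1..n}. \<tau> j \<in> {1..n} \<and> completion p n \<tau> j \<le> d j)"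

definition OPT :: "(nat \<Rightarrow> nat) \<Rightarrow> (nat \<Rightarrow> nat) \<Rightarrow> nat \<Rightarrow> nat" where
  "OPT p d n = Min {card (\<tau> ` {1..n}) | \<tau>. feasible p d n \<tau>}"

text \<open>First-fit state after processing jobs 1..j: (assignment, load per machine).\<close>
fun ff_state :: "(nat \<Rightarrow> nat) \<Rightarrow> (nat \<Rightarrow> nat) \<Rightarrow> nat \<Rightarrow> (nat \<Rightarrow> nat) \<times> (nat \<Rightarrow> nat)" where
  "ff_state p d 0 = (\<lambda>_. 0, \<lambda>_. 0)"
| "ff_state p d (Suc j) =
     (let (a, L) = ff_state p d j;
          m = (LEAST m. 1 \<le> m \<and> L m + p (Suc j) \<le> d (Suc j))
      in (a(Suc j := m), L(m := L m + p (Suc j))))"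

definition FF :: "(nat \<Rightarrow> nat) \<Rightarrow> (nat \<Rightarrow> nat) \<Rightarrow> nat \<Rightarrow> nat" where
  "FF p d n = card (fst (ff_state p d n) ` {1..n})"

end

(* Compare first-fit with an optimal schedule job by job.  While a job with deadline D is
   scheduled, all later deadlines are at most D, and two facts are maintained: any two
   first-fit machines together carry more than D, and for every u <= D the first-fit loads
   truncated at u sum to at most the optimal loads truncated at 2u.  When first-fit opens a
   new machine for a job of size q, every open machine carries more than D - q, whereas the
   optimal machine receiving the job carries at most D - q; evaluating the truncated sums at
   u = D + 1 - q bounds the open first-fit machines by twice the other optimal machines,
   whence FF <= 2 OPT - 1. *)

theory Submission
  imports Defs
begin

lemma sum_split_off:
  assumes "finite A" and "i \<notin> A \<Longrightarrow> f i = 0"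
  shows "sum f A = f i + sum f (A - {i})"
  using assms by (cases "i \<in> A") (auto simp: sum.remove)

lemma sum_insert_fun_upd:
  assumes "finite A"
  shows "(\<Sum>m\<in>insert c A. g ((L(c := a)) m)) = g a + (\<Sum>m\<in>A - {c}. g (L m))"
  using assms by (simp add: sum.insert_remove)

lemma mult_min_double_le:
  fixes a u v :: nat
  assumes "u \<le> v"
  shows "u * min a (2 * v) \<le> v * min a (2 * u)"
proof (cases "a \<le> 2 * u")
  case True
  then show ?thesis using assms by (simp add: mult_right_mono)
next
  case False
  have "u * min a (2 * v) \<le> u * (2 * v)" by simp
  also have "\<dots> = v * min a (2 * u)" using False by simp
  finally show ?thesis .
qed

lemma sum_min_double_scale:
  fixes l :: "'m \<Rightarrow> nat"
  assumes "u \<le> v"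
  shows "u * (\<Sum>m\<in>B. min (l m) (2 * v)) \<le> v * (\<Sum>m\<in>B. min (l m) (2 * u))"
  unfolding sum_distrib_left by (rule sum_mono) (rule mult_min_double_le[OF assms])

text \<open>Here \<open>x\<close> and \<open>y\<close> are the loads of the machines receiving a job of size \<open>q\<close>
  under first-fit and under the optimal schedule, and \<open>A\<close>, \<open>B\<close> the other machines.\<close>
lemma truncated_sums_step:
  fixes L l :: "'m \<Rightarrow> nat"
  assumes A: "finite A"
    and old: "\<forall>w\<in>{1..D}. (\<Sum>m\<in>A. min (L m) w) + min x w \<le> (\<Sum>m\<in>B. min (l m) (2 * w)) + min y (2 * w)"
    and full: "\<forall>m\<in>A. D < L m + max x q"
    and xq: "x + q \<le> D" and yq: "y + q \<le> D" and q: "1 \<le> q" and u: "u \<in> {1..D}"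
  shows "(\<Sum>m\<in>A. min (L m) u) + min (x + q) u \<le> (\<Sum>m\<in>B. min (l m) (2 * u)) + min (y + q) (2 * u)"
proof -
  define F where "F w = (\<Sum>m\<in>A. min (L m) w)" for w
  define G where "G w = (\<Sum>m\<in>B. min (l m) (2 * w))" for w
  have old_u: "F u + min x u \<le> G u + min y (2 * u)" using old u unfolding F_def G_def by blast
  have "F u + min (x + q) u \<le> G u + min (y + q) (2 * u)"
  proof (cases "x < u \<and> 2 * u < y + q")
    case False
    then have "min (x + q) u - min x u \<le> min (y + q) (2 * u) - min y (2 * u)"
      by (auto simp: min_def)
    then show ?thesis using old_u by linarith
  next
    case True
    then have rhs: "min (y + q) (2 * u) = 2 * u" by simp
    have "F u \<le> G u + u"
    proof (cases "y \<le> u")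
      case True
      then show ?thesis using old_u \<open>x < u \<and> 2 * u < y + q\<close> by simp
    next
      case False
      \<comment> \<open>Every machine in \<open>A\<close> carries at least \<open>v \<ge> u\<close>, so \<open>F\<close> is linear up to \<open>v\<close>,
        while \<open>G w / w\<close> is nonincreasing; the bound at \<open>v\<close> thus transfers to \<open>u\<close>.\<close>
      define v where "v = D + 1 - max x q"
      have uv: "u \<le> v" and vD: "v \<in> {1..D}" and yv: "y < v + x"
        using True False xq yq q u unfolding v_def by auto
      have "F v = (\<Sum>m\<in>A. v)"
        unfolding F_def using full v_def by (intro sum.cong) auto
      then have Fv: "F v = card A * v" by simp
      have "card A * v + x \<le> G v + y"
        using old vD True uv Fv unfolding F_def G_def by (fastforce simp: min_def split: if_splits)
      then have "card A * v < G v + v" using yv by linarith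
      then have "u * (card A * v) < u * (G v + v)" using u by simp
      also have "\<dots> \<le> v * (G u + u)"
        using sum_min_double_scale[OF uv, of l B] unfolding G_def by (simp add: algebra_simps)
      finally have "(card A * u) * v < (G u + u) * v" by (simp add: algebra_simps)
      then have "card A * u < G u + u" by (rule mult_less_cancel2[THEN iffD1, THEN conjunct2])
      moreover have "F u \<le> card A * u"
        unfolding F_def using sum_bounded_above[of A "\<lambda>m. min (L m) u" u] by simp
      ultimately show ?thesis by linarith
    qed
    then show ?thesis using rhs by simp
  qed
  then show ?thesis unfolding F_def G_def .
qed

text \<open>\<open>A\<close>, \<open>L\<close>: machines and loads of first-fit; \<open>B\<close>, \<open>l\<close>: those of an optimal
  schedule; \<open>D\<close>: the deadline of the next job.\<close>
definition first_fit_invariant ::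
    "nat \<Rightarrow> 'm set \<Rightarrow> ('m \<Rightarrow> nat) \<Rightarrow> 'm set \<Rightarrow> ('m \<Rightarrow> nat) \<Rightarrow> bool" where
  "first_fit_invariant D A L B l \<longleftrightarrow>
     (\<forall>u\<in>{1..D}. (\<Sum>m\<in>A. min (L m) u) \<le> (\<Sum>m\<in>B. min (l m) (2 * u))) \<and>
     pairwise (\<lambda>a b. D < L a + L b) A"

lemma first_fit_invariant_empty: "first_fit_invariant D {} L {} l"
  by (simp add: first_fit_invariant_def)

lemma first_fit_invariant_mono:
  assumes "first_fit_invariant D A L B l" and "D' \<le> D"
  shows "first_fit_invariant D' A L B l"
  using assms unfolding first_fit_invariant_def pairwise_def by fastforce

lemma first_fit_invariant_step:
  fixes L l :: "'m \<Rightarrow> nat"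
  assumes inv: "first_fit_invariant D A L B l" and A: "finite A" and B: "finite B"
    and c_fits: "L c + q \<le> D" and c_new: "c \<notin> A \<Longrightarrow> L c = 0 \<and> (\<forall>m\<in>A. D < L m + q)"
    and z_fits: "l z + q \<le> D" and z_new: "z \<notin> B \<Longrightarrow> l z = 0" and q: "1 \<le> q"
  shows "first_fit_invariant D (insert c A) (L(c := L c + q)) (insert z B) (l(z := l z + q))"
proof -
  have pair: "\<And>a b. a \<in> A \<Longrightarrow> b \<in> A \<Longrightarrow> a \<noteq> b \<Longrightarrow> D < L a + L b"
    using inv unfolding first_fit_invariant_def pairwise_def by blast
  have A': "finite (A - {c})" using A by simp
  have full: "\<forall>m\<in>A - {c}. D < L m + max (L c) q"
  proof (cases "c \<in> A")
    case True
    have "D < L m + max (L c) q" if "m \<in> A - {c}" for m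
      using pair[of m c] True that by (simp add: less_le_trans)
    then show ?thesis by blast
  next
    case False
    then show ?thesis using c_new by (auto simp: max_def)
  qed
  have old: "\<forall>w\<in>{1..D}. (\<Sum>m\<in>A - {c}. min (L m) w) + min (L c) w
      \<le> (\<Sum>m\<in>B - {z}. min (l m) (2 * w)) + min (l z) (2 * w)"
  proof
    fix w assume "w \<in> {1..D}"
    then have "(\<Sum>m\<in>A. min (L m) w) \<le> (\<Sum>m\<in>B. min (l m) (2 * w))"
      using inv unfolding first_fit_invariant_def by blast
    moreover have "(\<Sum>m\<in>A. min (L m) w) = min (L c) w + (\<Sum>m\<in>A - {c}. min (L m) w)"
      by (rule sum_split_off[OF A]) (use c_new in simp)
    moreover have "(\<Sum>m\<in>B. min (l m) (2 * w)) = min (l z) (2 * w) + (\<Sum>m\<in>B - {z}. min (l m) (2 * w))"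
      by (rule sum_split_off[OF B]) (use z_new in simp)
    ultimately show "(\<Sum>m\<in>A - {c}. min (L m) w) + min (L c) w
      \<le> (\<Sum>m\<in>B - {z}. min (l m) (2 * w)) + min (l z) (2 * w)" by simp
  qed
  have "(\<Sum>m\<in>insert c A. min ((L(c := L c + q)) m) u)
      \<le> (\<Sum>m\<in>insert z B. min ((l(z := l z + q)) m) (2 * u))" if "u \<in> {1..D}" for u
  proof -
    have "(\<Sum>m\<in>insert c A. min ((L(c := L c + q)) m) u) = min (L c + q) u + (\<Sum>m\<in>A - {c}. min (L m) u)"
      by (rule sum_insert_fun_upd[OF A])
    moreover have "(\<Sum>m\<in>insert z B. min ((l(z := l z + q)) m) (2 * u))
        = min (l z + q) (2 * u) + (\<Sum>m\<in>B - {z}. min (l m) (2 * u))"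
      by (rule sum_insert_fun_upd[OF B])
    ultimately show ?thesis using truncated_sums_step[OF A' old full c_fits z_fits q that] by simp
  qed
  moreover have "pairwise (\<lambda>a b. D < (L(c := L c + q)) a + (L(c := L c + q)) b) (insert c A)"
  proof -
    have "D < L m + (L c + q)" if "m \<in> A" "m \<noteq> c" for m
      using pair[of m c] c_new that by (cases "c \<in> A") auto
    moreover have "pairwise (\<lambda>a b. D < (L(c := L c + q)) a + (L(c := L c + q)) b) A"
      using pair unfolding pairwise_def by fastforce
    ultimately show ?thesis by (auto simp: pairwise_insert add.commute)
  qed
  ultimately show ?thesis unfolding first_fit_invariant_def by blast
qed

lemma first_fit_invariant_card:
  fixes L l :: "'m \<Rightarrow> nat"
  assumes inv: "first_fit_invariant D A L B l" and A: "finite A" and B: "finite B"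
    and full: "\<forall>m\<in>A. D < L m + q"
    and z_fits: "l z + q \<le> D" and z_new: "z \<notin> B \<Longrightarrow> l z = 0" and q: "1 \<le> q"
  shows "card A \<le> 2 * card (B - {z})"
proof -
  define u where "u = D + 1 - q"
  have u: "u \<in> {1..D}" using z_fits q unfolding u_def by auto
  have "(\<Sum>m\<in>A. min (L m) u) = (\<Sum>m\<in>A. u)"
    using full unfolding u_def by (intro sum.cong) auto
  then have "card A * u = (\<Sum>m\<in>A. min (L m) u)" by simp
  also have "\<dots> \<le> (\<Sum>m\<in>B. min (l m) (2 * u))"
    using inv u unfolding first_fit_invariant_def by blast
  also have "\<dots> = min (l z) (2 * u) + (\<Sum>m\<in>B - {z}. min (l m) (2 * u))"
    by (rule sum_split_off[OF B]) (use z_new in simp)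
  also have "\<dots> < u + card (B - {z}) * (2 * u)"
    using z_fits q sum_bounded_above[of "B - {z}" "\<lambda>m. min (l m) (2 * u)" "2 * u"]
    unfolding u_def by fastforce
  finally have "card A * u < (2 * card (B - {z}) + 1) * u" by (simp add: algebra_simps)
  then have "card A < 2 * card (B - {z}) + 1"
    by (rule mult_less_cancel2[THEN iffD1, THEN conjunct2])
  then show ?thesis by simp
qed

definition ff_load :: "(nat \<Rightarrow> nat) \<Rightarrow> (nat \<Rightarrow> nat) \<Rightarrow> nat \<Rightarrow> nat \<Rightarrow> nat" where
  "ff_load p d t = snd (ff_state p d t)"

definition ff_machine :: "(nat \<Rightarrow> nat) \<Rightarrow> (nat \<Rightarrow> nat) \<Rightarrow> nat \<Rightarrow> nat" where
  "ff_machine p d t = (LEAST m. 1 \<le> m \<and> ff_load p d t m + p (Suc t) \<le> d (Suc t))"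

definition ff_used :: "(nat \<Rightarrow> nat) \<Rightarrow> (nat \<Rightarrow> nat) \<Rightarrow> nat \<Rightarrow> nat set" where
  "ff_used p d t = {m. 0 < ff_load p d t m}"

lemma ff_state_Suc:
  "ff_state p d (Suc t) =
     ((fst (ff_state p d t))(Suc t := ff_machine p d t),
      (ff_load p d t)(ff_machine p d t := ff_load p d t (ff_machine p d t) + p (Suc t)))"
  by (simp add: ff_machine_def ff_load_def Let_def split: prod.splits)

lemma ff_load_Suc:
  "ff_load p d (Suc t) = (ff_load p d t)(ff_machine p d t := ff_load p d t (ff_machine p d t) + p (Suc t))"
  by (simp only: ff_load_def[of p d "Suc t"] ff_state_Suc snd_conv)

lemma ff_used_0: "ff_used p d 0 = {}"
  by (simp add: ff_used_def ff_load_def)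

locale schedule_instance =
  fixes p d :: "nat \<Rightarrow> nat" and n :: nat
  assumes pos: "\<forall>j\<in>{1..n}. 0 < p j"
    and dl: "\<forall>j\<in>{1..n}. p j \<le> d j"
begin

lemma job_size_ge_1: "Suc t \<le> n \<Longrightarrow> 1 \<le> p (Suc t)"
  using pos by (simp add: Suc_le_eq)

lemma ff_used_Suc:
  assumes "Suc t \<le> n"
  shows "ff_used p d (Suc t) = insert (ff_machine p d t) (ff_used p d t)"
  using pos assms unfolding ff_used_def ff_load_Suc by auto

lemma ff_machine_first_fit:
  assumes t: "Suc t \<le> n" and used: "ff_used p d t = {1..k}"
  shows "ff_machine p d t \<in> {1..Suc k}"
    and "ff_load p d t (ff_machine p d t) + p (Suc t) \<le> d (Suc t)"
    and "\<forall>m\<in>{1..<ff_machine p d t}. d (Suc t) < ff_load p d t m + p (Suc t)"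
proof -
  let ?fits = "\<lambda>m. 1 \<le> m \<and> ff_load p d t m + p (Suc t) \<le> d (Suc t)"
  have "Suc k \<notin> ff_used p d t" using used by simp
  then have "ff_load p d t (Suc k) = 0" unfolding ff_used_def by simp
  then have "?fits (Suc k)" using dl t by auto
  then have "?fits (ff_machine p d t)" and "ff_machine p d t \<le> Suc k"
    unfolding ff_machine_def by (rule LeastI, rule Least_le)
  then show "ff_machine p d t \<in> {1..Suc k}"
    and "ff_load p d t (ff_machine p d t) + p (Suc t) \<le> d (Suc t)" by auto
  show "\<forall>m\<in>{1..<ff_machine p d t}. d (Suc t) < ff_load p d t m + p (Suc t)"
  proof
    fix m assume m: "m \<in> {1..<ff_machine p d t}"
    then have "\<not> ?fits m" unfolding ff_machine_def by (intro not_less_Least) simp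
    then show "d (Suc t) < ff_load p d t m + p (Suc t)" using m by auto
  qed
qed

lemma ff_used_interval: "t \<le> n \<Longrightarrow> \<exists>k. ff_used p d t = {1..k}"
proof (induction t)
  case 0
  then show ?case using ff_used_0 by auto
next
  case (Suc t)
  then obtain k where used: "ff_used p d t = {1..k}" by auto
  have "ff_machine p d t \<in> {1..Suc k}" using ff_machine_first_fit(1)[OF Suc.prems used] .
  then have "ff_used p d (Suc t) = {1..k} \<or> ff_used p d (Suc t) = {1..Suc k}"
    using ff_used_Suc[OF Suc.prems] used by (auto simp: atLeastAtMostSuc_conv)
  then show ?case by blast
qed

lemma finite_ff_used: "t \<le> n \<Longrightarrow> finite (ff_used p d t)"
  using ff_used_interval by fastforce

lemma ff_machine_fits:
  assumes "Suc t \<le> n"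
  shows "ff_load p d t (ff_machine p d t) + p (Suc t) \<le> d (Suc t)"
  using assms ff_used_interval[of t] ff_machine_first_fit(2) by fastforce

lemma ff_machine_new:
  assumes t: "Suc t \<le> n" and new: "ff_machine p d t \<notin> ff_used p d t"
  shows "\<forall>m\<in>ff_used p d t. d (Suc t) < ff_load p d t m + p (Suc t)"
proof -
  obtain k where used: "ff_used p d t = {1..k}" using ff_used_interval t by fastforce
  then have "ff_used p d t \<subseteq> {1..<ff_machine p d t}"
    using ff_machine_first_fit(1)[OF t used] new by auto
  then show ?thesis using ff_machine_first_fit(3)[OF t used] by blast
qed

lemma FF_eq_card_ff_used: "FF p d n = card (ff_used p d n)"
proof -
  have "fst (ff_state p d t) ` {1..t} = ff_used p d t" if "t \<le> n" for t
    using that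
  proof (induction t)
    case 0
    then show ?case using ff_used_0 by simp
  next
    case (Suc t)
    have "fst (ff_state p d (Suc t)) ` {1..Suc t} = insert (ff_machine p d t) (fst (ff_state p d t) ` {1..t})"
      by (auto simp del: ff_state.simps simp: ff_state_Suc atLeastAtMostSuc_conv)
    then show ?case using Suc ff_used_Suc by simp
  qed
  then show ?thesis unfolding FF_def by simp
qed

end


definition partial_load :: "(nat \<Rightarrow> nat) \<Rightarrow> (nat \<Rightarrow> nat) \<Rightarrow> nat \<Rightarrow> nat \<Rightarrow> nat" where
  "partial_load p \<tau> t m = (\<Sum>s\<in>{1..t}. if \<tau> s = m then p s else 0)"

lemma partial_load_Suc:
  "partial_load p \<tau> (Suc t) = (partial_load p \<tau> t)(\<tau> (Suc t) := partial_load p \<tau> t (\<tau> (Suc t)) + p (Suc t))"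
  unfolding partial_load_def by (auto simp: fun_eq_iff)

lemma partial_load_eq_0: "m \<notin> \<tau> ` {1..t} \<Longrightarrow> partial_load p \<tau> t m = 0"
  unfolding partial_load_def by (auto intro: sum.neutral)

lemma feasible_partial_load:
  assumes "feasible p d n \<tau>" and t: "Suc t \<le> n"
  shows "partial_load p \<tau> t (\<tau> (Suc t)) + p (Suc t) \<le> d (Suc t)"
proof -
  have "{k \<in> {1..n}. k \<le> Suc t \<and> \<tau> k = \<tau> (Suc t)} = {k \<in> {1..Suc t}. \<tau> k = \<tau> (Suc t)}"
    using t by auto
  have "partial_load p \<tau> t (\<tau> (Suc t)) + p (Suc t) = partial_load p \<tau> (Suc t) (\<tau> (Suc t))"
    by (simp add: partial_load_Suc)
  also have "\<dots> = (\<Sum>k\<in>{k \<in> {1..Suc t}. \<tau> k = \<tau> (Suc t)}. p k)"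
    unfolding partial_load_def by (rule sum.inter_filter[symmetric]) simp
  also have "\<dots> = completion p n \<tau> (Suc t)"
    unfolding completion_def using \<open>{k \<in> {1..n}. _} = _\<close> by simp
  also have "\<dots> \<le> d (Suc t)"
    using assms unfolding feasible_def by force
  finally show ?thesis .
qed

lemma OPT_attained:
  assumes "\<forall>j\<in>{1..n}. p j \<le> d j"
  shows "\<exists>\<tau>. feasible p d n \<tau> \<and> card (\<tau> ` {1..n}) = OPT p d n"
proof -
  let ?S = "{card (\<tau> ` {1..n}) | \<tau>. feasible p d n \<tau>}"
  have "completion p n id j = p j" if "j \<in> {1..n}" for j
  proof -
    have "{k \<in> {1..n}. k \<le> j \<and> id k = id j} = {j}" using that by auto
    then show ?thesis unfolding completion_def by simp
  qed
  then have "feasible p d n id" using assms unfolding feasible_def by simp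
  then have "?S \<noteq> {}" by blast
  moreover have "?S \<subseteq> {0..n}" using card_image_le[of "{1..n}"] by fastforce
  then have "finite ?S" by (rule finite_subset) simp
  ultimately have "OPT p d n \<in> ?S" unfolding OPT_def by (rule Min_in[rotated])
  then show ?thesis by auto
qed

locale decreasing_instance = schedule_instance +
  assumes dec: "\<forall>i j. 1 \<le> i \<longrightarrow> i \<le> j \<longrightarrow> j \<le> n \<longrightarrow> d j \<le> d i"
begin

lemma first_fit_invariant_holds:
  assumes feas: "feasible p d n \<tau>"
  shows "Suc t \<le> n \<Longrightarrow> first_fit_invariant (d (Suc t))
           (ff_used p d t) (ff_load p d t) (\<tau> ` {1..t}) (partial_load p \<tau> t)"
proof (induction t)
  case 0
  then show ?case using ff_used_0 first_fit_invariant_empty by simp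
next
  case (Suc t)
  let ?c = "ff_machine p d t"
  have t: "Suc t \<le> n" using Suc.prems by simp
  have "first_fit_invariant (d (Suc t))
      (insert ?c (ff_used p d t)) ((ff_load p d t)(?c := ff_load p d t ?c + p (Suc t)))
      (insert (\<tau> (Suc t)) (\<tau> ` {1..t}))
      ((partial_load p \<tau> t)(\<tau> (Suc t) := partial_load p \<tau> t (\<tau> (Suc t)) + p (Suc t)))"
  proof (rule first_fit_invariant_step[OF Suc.IH[OF t] finite_ff_used])
    show "?c \<notin> ff_used p d t \<Longrightarrow>
        ff_load p d t ?c = 0 \<and> (\<forall>m\<in>ff_used p d t. d (Suc t) < ff_load p d t m + p (Suc t))"
      using ff_machine_new[OF t] unfolding ff_used_def by simp
  qed (use t job_size_ge_1 ff_machine_fits[OF t] feasible_partial_load[OF feas t] partial_load_eq_0 in auto)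
  moreover have "\<tau> ` {1..Suc t} = insert (\<tau> (Suc t)) (\<tau> ` {1..t})"
    by (auto simp: atLeastAtMostSuc_conv)
  ultimately have "first_fit_invariant (d (Suc t)) (ff_used p d (Suc t)) (ff_load p d (Suc t))
      (\<tau> ` {1..Suc t}) (partial_load p \<tau> (Suc t))"
    by (simp only: ff_used_Suc[OF t] ff_load_Suc partial_load_Suc)
  then show ?case by (rule first_fit_invariant_mono) (use dec Suc.prems in simp)
qed

lemma ff_card_bound:
  assumes feas: "feasible p d n \<tau>"
  shows "1 \<le> t \<Longrightarrow> t \<le> n \<Longrightarrow> card (ff_used p d t) + 1 \<le> 2 * card (\<tau> ` {1..t})"
proof (induction t)
  case 0
  then show ?case by simp
next
  case (Suc t)
  let ?c = "ff_machine p d t" and ?z = "\<tau> (Suc t)" and ?V = "\<tau> ` {1..t}"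
  have t: "Suc t \<le> n" using Suc.prems by simp
  have V_Suc: "\<tau> ` {1..Suc t} = insert ?z ?V" by (auto simp: atLeastAtMostSuc_conv)
  show ?case
  proof (cases "?c \<in> ff_used p d t")
    case True
    then have "1 \<le> t" using ff_used_0 by (cases t) auto
    moreover have "card ?V \<le> card (\<tau> ` {1..Suc t})" unfolding V_Suc by (simp add: card_mono subset_insertI)
    ultimately show ?thesis using Suc.IH t True ff_used_Suc[OF t] by (simp add: insert_absorb)
  next
    case False
    have "card (ff_used p d t) \<le> 2 * card (?V - {?z})"
    proof (rule first_fit_invariant_card[OF first_fit_invariant_holds[OF feas t]])
      show "finite (ff_used p d t)" using finite_ff_used t by simp
      show "?z \<notin> ?V \<Longrightarrow> partial_load p \<tau> t ?z = 0" by (rule partial_load_eq_0)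
    qed (use ff_machine_new[OF t False] feasible_partial_load[OF feas t] job_size_ge_1[OF t] in simp_all)
    moreover have "card (\<tau> ` {1..Suc t}) = card (?V - {?z}) + 1"
      unfolding V_Suc by (simp add: card.insert_remove)
    moreover have "card (ff_used p d (Suc t)) = card (ff_used p d t) + 1"
      using ff_used_Suc[OF t] False finite_ff_used[of t] t by simp
    ultimately show ?thesis by linarith
  qed
qed

end

theorem mainTheorem7:
  fixes p d :: "nat \<Rightarrow> nat" and n :: nat
  assumes pos: "\<forall>j\<in>{1..n}. 0 < p j"
    and dl: "\<forall>j\<in>{1..n}. p j \<le> d j"
    and dec: "\<forall>i j. 1 \<le> i \<longrightarrow> i \<le> j \<longrightarrow> j \<le> n \<longrightarrow> d j \<le> d i"
  shows "(OPT p d n \<ge> 2 \<longrightarrow> FF p d n < 2 * OPT p d n)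
       \<and> (OPT p d n = 1 \<longrightarrow> FF p d n = 1)
       \<and> FF p d n \<le> 2 * OPT p d n"
proof -
  interpret decreasing_instance p d n
    using pos dl dec by unfold_locales
  obtain \<tau> where feas: "feasible p d n \<tau>" and opt: "card (\<tau> ` {1..n}) = OPT p d n"
    using OPT_attained[OF dl] by blast
  show ?thesis
  proof (cases n)
    case 0
    then show ?thesis using FF_eq_card_ff_used ff_used_0 opt by simp
  next
    case (Suc m)
    then have "ff_used p d n \<noteq> {}" using ff_used_Suc[of m] by simp
    then have "1 \<le> FF p d n"
      using FF_eq_card_ff_used finite_ff_used[of n] by (simp add: Suc_le_eq card_gt_0_iff)
    moreover have "FF p d n + 1 \<le> 2 * OPT p d n"
      using ff_card_bound[OF feas, of n] Suc FF_eq_card_ff_used opt by simp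
    ultimately show ?thesis by linarith
  qed
qed

end
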